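(* Let $D$ be a distribution supported on $[0,1]$ with mean $\mu$ and variance $\sigma^2$, and $\epsilon>0$. The sample-reusing mean estimator (described in the context) returns $\hat\mu$ such that with probability at least $1/4$, $|\hat\mu-\mu|\le\epsilon$. Moreover, its expected number of samples is $O\left(\frac{\sigma^2}{\epsilon^2}+\frac1\epsilon\right)$.
   Context: Sample-reusing mean estimator (integer rounding ignored): set $T_1=1+\frac{10}{\epsilon}$; draw i.i.d. $X_1,\dots,X_{T_1}\sim D$; compute $\tilde\mu=\frac1{T_1}\sum_{i=1}^{T_1}X_i$ and $\tilde\sigma^2=\frac1{T_1-1}\sum_{i=1}^{T_1}(X_i-\tilde\mu)^2$; set $T_2=\max\left(\frac{60\tilde\sigma^2}{\epsilon^2}-T_1,0\right)$; draw $T_2$ fresh samples $X_{T_1+1},\dots,X_{T_1+T_2}$; return $\hat\mu=\frac{1}{T_1+T_2}\sum_{i=1}^{T_1+T_2}X_i$. *)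

theory Defs
  imports "HOL-Probability.Probability"
begin

text \<open>Samples are modelled as an infinite i.i.d. sequence omega :: nat => real drawn from
  the product measure of copies of D; the estimator reads omega 0, omega 1, ... in order.\<close>

definition T1 :: "real \<Rightarrow> nat" where
  "T1 \<epsilon> = nat \<lceil>1 + 10 / \<epsilon>\<rceil>"

definition emp_mean :: "nat \<Rightarrow> (nat \<Rightarrow> real) \<Rightarrow> real" where
  "emp_mean n \<omega> = (\<Sum>i<n. \<omega> i) / real n"

definition emp_var :: "nat \<Rightarrow> (nat \<Rightarrow> real) \<Rightarrow> real" where
  "emp_var n \<omega> = (\<Sum>i<n. (\<omega> i - emp_mean n \<omega>)^2) / (real n - 1)"

definition T2 :: "real \<Rightarrow> (nat \<Rightarrow> real) \<Rightarrow> nat" where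
  "T2 \<epsilon> \<omega> = nat \<lceil>max (60 * emp_var (T1 \<epsilon>) \<omega> / \<epsilon>^2 - real (T1 \<epsilon>)) 0\<rceil>"

definition num_samples :: "real \<Rightarrow> (nat \<Rightarrow> real) \<Rightarrow> nat" where
  "num_samples \<epsilon> \<omega> = T1 \<epsilon> + T2 \<epsilon> \<omega>"

definition estimate :: "real \<Rightarrow> (nat \<Rightarrow> real) \<Rightarrow> real" where
  "estimate \<epsilon> \<omega> = emp_mean (num_samples \<epsilon> \<omega>) \<omega>"

end

theory Submission
  imports Defs
begin

text \<open>
  The total sample size \<open>N = T1 + T2\<close> is a function of the first \<open>T1\<close> samples only, and the
  later samples are independent of them. Hence for every weight \<open>W\<close> depending only on the first
  \<open>T1\<close> samples, the error sum \<open>S = \<Sum>i<N. X i - \<mu>\<close> satisfies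
  \<open>E[W S\<^sup>2] = E[W A\<^sup>2] + \<sigma>\<^sup>2 E[W T2]\<close>, where \<open>A\<close> is the error sum of the first block: all cross
  terms vanish. With \<open>W = 1 / (\<epsilon> N)\<^sup>2\<close> on an event \<open>G\<close> on which \<open>N \<ge> L\<close>, Markov's inequality
  bounds the failure probability by \<open>2 \<sigma>\<^sup>2 / (\<epsilon>\<^sup>2 L) + P(\<not> G)\<close>. If \<open>\<sigma>\<^sup>2 \<le> 3 \<epsilon>\<close>, take \<open>G\<close>
  trivial and \<open>L = T1 \<ge> 10 / \<epsilon>\<close>. Otherwise let \<open>G\<close> say that the first block's sum of squared
  deviations and its deviation sum are close to their means (Chebyshev); on \<open>G\<close> the empirical
  variance is at least \<open>\<sigma>\<^sup>2 / 4\<close>, so \<open>L = 15 \<sigma>\<^sup>2 / \<epsilon>\<^sup>2\<close> works. In both cases the failure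
  probability is at most \<open>3 / 5\<close>. For the sample size, \<open>E[N] \<le> T1 + 1 + 60 E[emp_var] / \<epsilon>\<^sup>2\<close>
  and \<open>(T1 - 1) E[emp_var] \<le> T1 \<sigma>\<^sup>2\<close>.
\<close>

lemma sum_square_diff_expand:
  fixes x :: "nat \<Rightarrow> real"
  shows "(\<Sum>i<n. (x i - c)\<^sup>2) = (\<Sum>i<n. (x i)\<^sup>2) - 2 * c * (\<Sum>i<n. x i) + real n * c\<^sup>2"
proof -
  have "(\<Sum>i<n. (x i - c)\<^sup>2) = (\<Sum>i<n. (x i)\<^sup>2 - (2 * c) * x i + c\<^sup>2)"
    by (simp add: power2_diff algebra_simps)
  then show ?thesis
    by (simp add: sum.distrib sum_subtractf sum_distrib_left)
qed

lemma sum_square_dev_decomp: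
  fixes x :: "nat \<Rightarrow> real"
  assumes "0 < n"
  shows "(\<Sum>i<n. (x i - c)\<^sup>2) = (\<Sum>i<n. (x i - emp_mean n x)\<^sup>2) + (\<Sum>i<n. x i - c)\<^sup>2 / real n"
proof -
  define S where "S = (\<Sum>i<n. x i)"
  have mean: "emp_mean n x = S / n"
    unfolding emp_mean_def S_def ..
  have dev: "(\<Sum>i<n. x i - c) = S - n * c"
    by (simp add: S_def sum_subtractf)
  have "Q - 2 * c * S + real n * c\<^sup>2
        = (Q - 2 * (S / n) * S + real n * (S / n)\<^sup>2) + (S - n * c)\<^sup>2 / real n" for Q
    using assms by (simp add: field_simps power2_eq_square)
  then show ?thesis
    unfolding mean dev sum_square_diff_expand[of x c n] sum_square_diff_expand[of x "S / n" n]
      S_def[symmetric] .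
qed

lemma square_add_sum_expand:
  fixes a :: real and x :: "nat \<Rightarrow> real"
  shows "w * (a + (\<Sum>i\<in>J. x i))\<^sup>2
    = w * a\<^sup>2 + (\<Sum>i\<in>J. 2 * (w * a) * x i) + (\<Sum>i\<in>J. \<Sum>j\<in>J. w * x i * x j)"
proof -
  have "(\<Sum>i\<in>J. x i) * (\<Sum>i\<in>J. x i) = (\<Sum>i\<in>J. \<Sum>j\<in>J. x i * x j)"
    by (rule sum_product)
  then have "w * ((\<Sum>i\<in>J. x i) * (\<Sum>i\<in>J. x i)) = (\<Sum>i\<in>J. \<Sum>j\<in>J. w * x i * x j)"
    by (simp add: sum_distrib_left mult.assoc)
  moreover have "(\<Sum>i\<in>J. 2 * (w * a) * x i) = 2 * w * a * (\<Sum>i\<in>J. x i)"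
    by (simp add: sum_distrib_left mult.assoc)
  ultimately show ?thesis
    by (simp add: power2_eq_square algebra_simps)
qed

lemma sum_if_less_atLeastLessThan:
  fixes m n k :: nat
  assumes "m \<le> n + k"
  shows "(\<Sum>i\<in>{n..<n + k}. if i < m then f i else 0) = (\<Sum>i\<in>{n..<m}. f i)"
proof -
  have "(\<Sum>i\<in>{n..<n + k}. if i < m then f i else 0) = (\<Sum>i\<in>{i\<in>{n..<n + k}. i < m}. f i)"
    by (rule sum.inter_filter[symmetric]) simp
  also have "{i\<in>{n..<n + k}. i < m} = {n..<m}"
    using assms by auto
  finally show ?thesis .
qed

definition unit_cube :: "nat set \<Rightarrow> (nat \<Rightarrow> real) \<Rightarrow> bool" where
  "unit_cube I \<omega> \<longleftrightarrow> (\<forall>i\<in>I. 0 \<le> \<omega> i \<and> \<omega> i \<le> 1)"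

lemma emp_var_nonneg: "2 \<le> n \<Longrightarrow> 0 \<le> emp_var n x"
  unfolding emp_var_def by (intro divide_nonneg_nonneg sum_nonneg) auto

lemma emp_var_le_half:
  assumes n: "2 \<le> n" and x: "unit_cube {..<n} x"
  shows "emp_var n x \<le> 1/2"
proof -
  have "(\<Sum>i<n. (x i - emp_mean n x)\<^sup>2) \<le> (\<Sum>i<n. (x i - 1/2)\<^sup>2)"
    using sum_square_dev_decomp[of n x "1/2"] n by simp
  also have "\<dots> \<le> (\<Sum>i<n. 1/4)"
  proof (rule sum_mono)
    fix i assume "i \<in> {..<n}"
    then have "x i * (x i - 1) \<le> 0"
      using x unfolding unit_cube_def by (intro mult_nonneg_nonpos) auto
    then show "(x i - 1/2)\<^sup>2 \<le> 1/4"
      by (simp add: power2_eq_square algebra_simps)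
  qed
  finally have "(\<Sum>i<n. (x i - emp_mean n x)\<^sup>2) \<le> real n / 4"
    by simp
  then have "emp_var n x \<le> (real n / 4) / (real n - 1)"
    unfolding emp_var_def using n by (intro divide_right_mono) auto
  also have "\<dots> \<le> 1/2"
    using n by (simp add: field_simps)
  finally show ?thesis .
qed

lemma emp_mean_restrict: "emp_mean n (restrict x {..<n}) = emp_mean n x"
  unfolding emp_mean_def by simp

lemma emp_var_restrict: "emp_var n (restrict x {..<n}) = emp_var n x"
  unfolding emp_var_def emp_mean_restrict by simp

lemma T1_lower: "0 < \<epsilon> \<Longrightarrow> 1 + 10 / \<epsilon> \<le> real (T1 \<epsilon>)"
  unfolding T1_def by (simp add: le_of_int_ceiling)

lemma T1_upper: "0 < \<epsilon> \<Longrightarrow> real (T1 \<epsilon>) \<le> 2 + 10 / \<epsilon>"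
  unfolding T1_def using ceiling_correct[of "1 + 10 / \<epsilon>"]
  by (simp add: add_pos_pos less_imp_le)

lemma two_le_T1:
  assumes "0 < \<epsilon>"
  shows "2 \<le> T1 \<epsilon>"
proof -
  have "1 < real (T1 \<epsilon>)"
    using T1_lower[OF assms] divide_pos_pos[of 10 \<epsilon>] assms by linarith
  then show ?thesis
    by linarith
qed

lemma T2_restrict: "T2 \<epsilon> (restrict x {..<T1 \<epsilon>}) = T2 \<epsilon> x"
  unfolding T2_def emp_var_restrict ..

lemma T2_lower: "60 * emp_var (T1 \<epsilon>) x / \<epsilon>\<^sup>2 \<le> real (T1 \<epsilon>) + real (T2 \<epsilon> x)"
  unfolding T2_def by (simp add: le_of_int_ceiling) linarith

lemma T2_upper:
  assumes "0 < \<epsilon>"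
  shows "real (T2 \<epsilon> x) \<le> 60 * emp_var (T1 \<epsilon>) x / \<epsilon>\<^sup>2 + 1"
proof -
  have "0 \<le> emp_var (T1 \<epsilon>) x"
    using emp_var_nonneg two_le_T1 assms by blast
  then show ?thesis
    unfolding T2_def using ceiling_correct[of "max (60 * emp_var (T1 \<epsilon>) x / \<epsilon>\<^sup>2 - real (T1 \<epsilon>)) 0"]
    by (auto simp: max_def)
qed

lemma T2_le_on_unit_cube:
  assumes \<epsilon>: "0 < \<epsilon>" and x: "unit_cube {..<T1 \<epsilon>} x"
  shows "T2 \<epsilon> x \<le> nat \<lceil>30 / \<epsilon>\<^sup>2\<rceil>"
proof -
  have "60 * emp_var (T1 \<epsilon>) x / \<epsilon>\<^sup>2 \<le> 60 * (1/2) / \<epsilon>\<^sup>2"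
    using emp_var_le_half[OF two_le_T1[OF \<epsilon>] x] by (intro divide_right_mono) auto
  then have "max (60 * emp_var (T1 \<epsilon>) x / \<epsilon>\<^sup>2 - real (T1 \<epsilon>)) 0 \<le> 30 / \<epsilon>\<^sup>2"
    using \<epsilon> by auto
  then show ?thesis
    unfolding T2_def by (intro nat_mono ceiling_mono)
qed

definition unit_bounded :: "(real \<Rightarrow> real) \<Rightarrow> bool" where
  "unit_bounded f \<longleftrightarrow> f \<in> borel_measurable borel \<and> (\<exists>c. \<forall>x\<in>{0..1}. \<bar>f x\<bar> \<le> c)"

lemma continuous_imp_unit_bounded:
  assumes "continuous_on UNIV f"
  shows "unit_bounded f"
proof -
  have "continuous_on {0..1} f"
    using assms continuous_on_subset by blast
  then obtain c where "\<forall>x\<in>{0..1}. norm (f x) \<le> c"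
    using continuous_on_compact_bound[OF compact_Icc] by metis
  then show ?thesis
    unfolding unit_bounded_def using borel_measurable_continuous_onI[OF assms] by auto
qed

lemma unit_bounded_mult: "unit_bounded f \<Longrightarrow> unit_bounded g \<Longrightarrow> unit_bounded (\<lambda>x. f x * g x)"
  unfolding unit_bounded_def
proof (elim conjE exE, intro conjI exI ballI)
  fix c d x assume "\<forall>x\<in>{0..1}. \<bar>f x\<bar> \<le> c" "\<forall>x\<in>{0..1}. \<bar>g x\<bar> \<le> d" "x \<in> {0..1::real}"
  then show "\<bar>f x * g x\<bar> \<le> c * d"
    by (simp add: abs_mult mult_mono')
qed auto

locale unit_interval_distr = prob_space D for D :: "real measure" +
  assumes sets_D: "sets D = sets borel"
    and AE_unit_interval: "AE x in D. 0 \<le> x \<and> x \<le> 1"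
begin

abbreviation Samples :: "(nat \<Rightarrow> real) measure" where
  "Samples \<equiv> PiM UNIV (\<lambda>_::nat. D)"

sublocale PS: product_prob_space "\<lambda>_::nat. D" UNIV
  by (intro product_prob_space.intro product_sigma_finite.intro product_prob_space_axioms.intro)
     (auto intro: prob_space_axioms prob_space_imp_sigma_finite)

lemma borel_measurable_D: "borel_measurable D = borel_measurable borel"
  by (rule measurable_cong_sets[OF sets_D refl])

lemma measurable_component_Samples: "(\<lambda>\<omega>. \<omega> i) \<in> measurable Samples D"
  by (rule measurable_component_singleton) simp

lemma borel_measurable_component[measurable (raw)]:
  "i \<in> I \<Longrightarrow> (\<lambda>\<omega>. \<omega> i) \<in> borel_measurable (PiM I (\<lambda>_::nat. D))"
  using measurable_component_singleton[of i I "\<lambda>_. D"]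
  by (simp add: measurable_cong_sets[OF refl sets_D])

lemma integrable_component:
  fixes f :: "real \<Rightarrow> real"
  assumes "integrable D f"
  shows "integrable Samples (\<lambda>\<omega>. f (\<omega> i))"
proof -
  have "integrable (distr Samples D (\<lambda>\<omega>. \<omega> i)) f"
    using PS.PiM_component[of i] assms by simp
  then show ?thesis
    using integrable_distr_eq[OF measurable_component_Samples] assms by auto
qed

lemma integral_component:
  fixes f :: "real \<Rightarrow> real"
  assumes "f \<in> borel_measurable D"
  shows "(\<integral>\<omega>. f (\<omega> i) \<partial>Samples) = expectation f"
  using integral_distr[OF measurable_component_Samples[of i] assms] PS.PiM_component[of i] by simp

lemma indep_vars_components: "PS.P.indep_vars (\<lambda>_. D) (\<lambda>i \<omega>. \<omega> i) UNIV"
proof -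
  have "distr Samples Samples (\<lambda>x. \<lambda>i\<in>UNIV. x i) = PiM UNIV (\<lambda>i. distr Samples D (\<lambda>\<omega>. \<omega> i))"
    using PS.PiM_component by (simp add: restrict_UNIV)
  then show ?thesis
    by (subst PS.P.indep_vars_iff_distr_eq_PiM) auto
qed

lemma integral_restrict_mult_components:
  fixes H :: "(nat \<Rightarrow> real) \<Rightarrow> real" and f g :: "real \<Rightarrow> real"
  assumes B: "finite B" "i \<notin> B" "j \<notin> B" "i \<noteq> j"
    and H: "H \<in> borel_measurable (PiM B (\<lambda>_. D))" "integrable Samples (\<lambda>\<omega>. H (restrict \<omega> B))"
    and f: "integrable D f" and g: "integrable D g"
  shows "(\<integral>\<omega>. H (restrict \<omega> B) * f (\<omega> i) * g (\<omega> j) \<partial>Samples)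
     = (\<integral>\<omega>. H (restrict \<omega> B) \<partial>Samples) * expectation f * expectation g"
proof -
  define K where "K = (\<lambda>l::nat. if l = 0 then B else if l = 1 then {i} else {j})"
  define Y where "Y = (\<lambda>l::nat. if l = 0 then H else if l = 1 then (\<lambda>x. f (x i)) else (\<lambda>x. g (x j)))"
  have indep_blocks: "PS.P.indep_vars (\<lambda>l. PiM (K l) (\<lambda>_. D)) (\<lambda>l \<omega>. restrict \<omega> (K l)) {0,1,2}"
    by (rule PS.P.indep_vars_restrict[OF indep_vars_components])
       (use B in \<open>auto simp: K_def disjoint_family_on_def\<close>)
  have [measurable]: "f \<in> borel_measurable borel" "g \<in> borel_measurable borel"
    using f g borel_measurable_D by auto
  have "PS.P.indep_vars (\<lambda>_. borel) (\<lambda>l \<omega>. Y l (restrict \<omega> (K l))) {0,1,2}"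
    by (rule PS.P.indep_vars_compose2[OF indep_blocks]) (use H in \<open>auto simp: Y_def K_def\<close>)
  moreover have "integrable Samples (\<lambda>\<omega>. Y l (restrict \<omega> (K l)))" if "l \<in> {0,1,2}" for l
    using that H integrable_component[OF f, of i] integrable_component[OF g, of j]
    by (auto simp: Y_def K_def)
  ultimately have "(\<integral>\<omega>. (\<Prod>l\<in>{0,1,2}. Y l (restrict \<omega> (K l))) \<partial>Samples)
      = (\<Prod>l\<in>{0,1,2}. \<integral>\<omega>. Y l (restrict \<omega> (K l)) \<partial>Samples)"
    by (intro PS.P.indep_vars_lebesgue_integral) auto
  then show ?thesis
    using integral_component[of f i] integral_component[of g j] f g
    by (simp add: Y_def K_def mult.assoc)
qed

lemma integrable_unit_bounded:
  assumes "unit_bounded f"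
  shows "integrable D f"
proof -
  obtain c where c: "\<forall>x\<in>{0..1}. \<bar>f x\<bar> \<le> c" and "f \<in> borel_measurable borel"
    using assms unfolding unit_bounded_def by blast
  then have "f \<in> borel_measurable D"
    by (subst borel_measurable_D)
  moreover have "AE x in D. norm (f x) \<le> c"
    using AE_unit_interval by eventually_elim (use c in auto)
  ultimately show ?thesis
    by (intro integrable_const_bound)
qed

lemma AE_unit_cube: "AE \<omega> in Samples. unit_cube UNIV \<omega>"
proof -
  have "AE \<omega> in Samples. 0 \<le> \<omega> i \<and> \<omega> i \<le> 1" for i
    by (rule PS.AE_component[OF UNIV_I AE_unit_interval])
  then show ?thesis
    unfolding unit_cube_def by (simp add: AE_all_countable)
qed

lemma integrable_bounded_on_unit_cube:
  fixes h :: "(nat \<Rightarrow> real) \<Rightarrow> real"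
  assumes "h \<in> borel_measurable Samples" and "\<And>\<omega>. unit_cube UNIV \<omega> \<Longrightarrow> \<bar>h \<omega>\<bar> \<le> c"
  shows "integrable Samples h"
  by (rule PS.P.integrable_const_bound[where B=c]) (use AE_unit_cube assms in auto)

definition prefix_measurable :: "nat \<Rightarrow> 'b measure \<Rightarrow> ((nat \<Rightarrow> real) \<Rightarrow> 'b) \<Rightarrow> bool" where
  "prefix_measurable n M h \<longleftrightarrow>
     h \<in> measurable (PiM {..<n} (\<lambda>_. D)) M \<and> (\<forall>\<omega>. h (restrict \<omega> {..<n}) = h \<omega>)"

definition prefix_bounded :: "nat \<Rightarrow> ((nat \<Rightarrow> real) \<Rightarrow> real) \<Rightarrow> bool" where
  "prefix_bounded n h \<longleftrightarrow> prefix_measurable n borel h \<and> (\<exists>c. \<forall>\<omega>. unit_cube UNIV \<omega> \<longrightarrow> \<bar>h \<omega>\<bar> \<le> c)"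

lemma measurable_prefix_measurable:
  assumes "prefix_measurable n M h"
  shows "h \<in> measurable Samples M"
proof -
  have "(\<lambda>\<omega>. h (restrict \<omega> {..<n})) \<in> measurable Samples M"
    using assms unfolding prefix_measurable_def
    by (intro measurable_compose[OF measurable_restrict_subset]) auto
  then show ?thesis
    using assms unfolding prefix_measurable_def by simp
qed

lemma integrable_prefix_bounded:
  assumes "prefix_bounded n h"
  shows "integrable Samples h"
proof -
  obtain c where "\<forall>\<omega>. unit_cube UNIV \<omega> \<longrightarrow> \<bar>h \<omega>\<bar> \<le> c"
    using assms unfolding prefix_bounded_def by blast
  then show ?thesis
    using measurable_prefix_measurable assms unfolding prefix_bounded_def
    by (intro integrable_bounded_on_unit_cube[where c=c]) auto
qed

lemma pred_unit_cube_prefix[measurable]: "Measurable.pred (PiM {..<m} (\<lambda>_. D)) (unit_cube {..<m})"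
  unfolding unit_cube_def by measurable

lemma prefix_bounded_const: "prefix_bounded n (\<lambda>_. c)"
  unfolding prefix_bounded_def prefix_measurable_def by auto

lemma prefix_bounded_mult:
  "prefix_bounded n h \<Longrightarrow> prefix_bounded n g \<Longrightarrow> prefix_bounded n (\<lambda>\<omega>. h \<omega> * g \<omega>)"
  unfolding prefix_bounded_def prefix_measurable_def
proof (elim conjE exE, intro conjI exI allI impI)
  fix c d \<omega>
  assume "\<forall>\<omega>. unit_cube UNIV \<omega> \<longrightarrow> \<bar>h \<omega>\<bar> \<le> c" "\<forall>\<omega>. unit_cube UNIV \<omega> \<longrightarrow> \<bar>g \<omega>\<bar> \<le> d"
    and "unit_cube UNIV \<omega>"
  then show "\<bar>h \<omega> * g \<omega>\<bar> \<le> c * d"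
    by (simp add: abs_mult mult_mono')
qed auto

lemma prefix_bounded_add:
  "prefix_bounded n h \<Longrightarrow> prefix_bounded n g \<Longrightarrow> prefix_bounded n (\<lambda>\<omega>. h \<omega> + g \<omega>)"
  unfolding prefix_bounded_def prefix_measurable_def
proof (elim conjE exE, intro conjI exI allI impI)
  fix c d \<omega>
  assume "\<forall>\<omega>. unit_cube UNIV \<omega> \<longrightarrow> \<bar>h \<omega>\<bar> \<le> c" "\<forall>\<omega>. unit_cube UNIV \<omega> \<longrightarrow> \<bar>g \<omega>\<bar> \<le> d"
    and "unit_cube UNIV \<omega>"
  then show "\<bar>h \<omega> + g \<omega>\<bar> \<le> c + d"
    by (meson abs_triangle_ineq add_mono order_trans)
qed auto

lemma prefix_bounded_sum_components:
  assumes "unit_bounded f"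
  shows "prefix_bounded n (\<lambda>\<omega>. \<Sum>i<n. f (\<omega> i))"
proof -
  obtain c where c: "\<forall>x\<in>{0..1}. \<bar>f x\<bar> \<le> c" and [measurable]: "f \<in> borel_measurable borel"
    using assms unfolding unit_bounded_def by blast
  have "\<bar>\<Sum>i<n. f (\<omega> i)\<bar> \<le> real n * c" if "unit_cube UNIV \<omega>" for \<omega>
  proof -
    have "\<bar>\<Sum>i<n. f (\<omega> i)\<bar> \<le> (\<Sum>i<n. \<bar>f (\<omega> i)\<bar>)"
      by (rule sum_abs)
    also have "\<dots> \<le> (\<Sum>i<n. c)"
      using that c by (intro sum_mono) (auto simp: unit_cube_def)
    finally show ?thesis
      by simp
  qed
  moreover have "(\<lambda>\<omega>. \<Sum>i<n. f (\<omega> i)) \<in> borel_measurable (PiM {..<n} (\<lambda>_. D))"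
    by measurable
  ultimately show ?thesis
    unfolding prefix_bounded_def prefix_measurable_def by auto
qed

lemma integrable_prefix_mult_components:
  assumes h: "prefix_bounded n h" and f: "unit_bounded f" and g: "unit_bounded g"
  shows "integrable Samples (\<lambda>\<omega>. h \<omega> * f (\<omega> i) * g (\<omega> j))"
proof -
  obtain c where c: "\<And>\<omega>. unit_cube UNIV \<omega> \<Longrightarrow> \<bar>h \<omega>\<bar> \<le> c"
    using h unfolding prefix_bounded_def by blast
  obtain cf where cf: "\<And>x. x \<in> {0..1} \<Longrightarrow> \<bar>f x\<bar> \<le> cf"
    using f unfolding unit_bounded_def by blast
  obtain cg where cg: "\<And>x. x \<in> {0..1} \<Longrightarrow> \<bar>g x\<bar> \<le> cg"
    using g unfolding unit_bounded_def by blast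
  have [measurable]: "f \<in> borel_measurable borel" "g \<in> borel_measurable borel" "h \<in> borel_measurable Samples"
    using f g h measurable_prefix_measurable unfolding unit_bounded_def prefix_bounded_def by auto
  show ?thesis
  proof (rule integrable_bounded_on_unit_cube[where c="c * cf * cg"])
    fix \<omega> assume \<omega>: "unit_cube UNIV \<omega>"
    then have "\<bar>f (\<omega> i)\<bar> \<le> cf" "\<bar>g (\<omega> j)\<bar> \<le> cg"
      using cf cg unfolding unit_cube_def by auto
    then show "\<bar>h \<omega> * f (\<omega> i) * g (\<omega> j)\<bar> \<le> c * cf * cg"
      using c[OF \<omega>] by (simp add: abs_mult mult_mono')
  qed measurable
qed

lemma integral_prefix_mult_components:
  assumes h: "prefix_bounded n h" and ij: "n \<le> i" "n \<le> j" "i \<noteq> j"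
    and f: "unit_bounded f" and g: "unit_bounded g"
  shows "(\<integral>\<omega>. h \<omega> * f (\<omega> i) * g (\<omega> j) \<partial>Samples)
    = (\<integral>\<omega>. h \<omega> \<partial>Samples) * expectation f * expectation g"
  using integral_restrict_mult_components[of "{..<n}" i j h f g] h ij
    integrable_unit_bounded[OF f] integrable_unit_bounded[OF g] integrable_prefix_bounded[OF h]
  unfolding prefix_bounded_def prefix_measurable_def by auto

lemma integral_prefix_mult_component:
  assumes "prefix_bounded n h" "n \<le> i" "unit_bounded f"
  shows "(\<integral>\<omega>. h \<omega> * f (\<omega> i) \<partial>Samples) = (\<integral>\<omega>. h \<omega> \<partial>Samples) * expectation f"
  using integral_prefix_mult_components[OF assms(1,2), of "Suc i" f "\<lambda>_. 1"] assms(2,3)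
    continuous_imp_unit_bounded[of "\<lambda>_. 1"] prob_space
  by simp

lemma integral_prefix_mult_centered_components:
  assumes h: "prefix_bounded n h" and ij: "n \<le> i" "n \<le> j" and f: "unit_bounded f" "expectation f = 0"
  shows "(\<integral>\<omega>. h \<omega> * f (\<omega> i) * f (\<omega> j) \<partial>Samples)
    = (if i = j then (\<integral>\<omega>. h \<omega> \<partial>Samples) * expectation (\<lambda>x. f x * f x) else 0)"
proof (cases "i = j")
  case True
  then show ?thesis
    using integral_prefix_mult_component[OF h ij(1) unit_bounded_mult[OF f(1) f(1)]]
    by (simp add: mult.assoc)
next
  case False
  then show ?thesis
    using integral_prefix_mult_components[OF h ij False f(1) f(1)] f(2) by simp
qed

text \<open>The coefficients depend only on the first \<open>n\<close> samples and the later samples are centred and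
  independent of them and of each other, so only the diagonal terms of the square survive.\<close>

lemma has_bochner_integral_weighted_square:
  assumes w: "prefix_bounded n w" and a: "prefix_bounded n a" and b: "\<And>i. i \<in> J \<Longrightarrow> prefix_bounded n (b i)"
    and J: "finite J" "\<And>i. i \<in> J \<Longrightarrow> n \<le> i"
    and f: "unit_bounded f" "expectation f = 0"
  shows "has_bochner_integral Samples (\<lambda>\<omega>. w \<omega> * (a \<omega> + (\<Sum>i\<in>J. b i \<omega> * f (\<omega> i)))\<^sup>2)
    ((\<integral>\<omega>. w \<omega> * (a \<omega>)\<^sup>2 \<partial>Samples) + expectation (\<lambda>x. f x * f x) * (\<Sum>i\<in>J. \<integral>\<omega>. w \<omega> * (b i \<omega>)\<^sup>2 \<partial>Samples))"
proof -
  have wa: "prefix_bounded n (\<lambda>\<omega>. w \<omega> * (a \<omega>)\<^sup>2)"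
    unfolding power2_eq_square using prefix_bounded_mult w a by blast
  have wab: "prefix_bounded n (\<lambda>\<omega>. 2 * (w \<omega> * a \<omega>) * b i \<omega>)" if "i \<in> J" for i
    by (intro prefix_bounded_mult prefix_bounded_const w a b that)
  have wbb: "prefix_bounded n (\<lambda>\<omega>. w \<omega> * b i \<omega> * b j \<omega>)" if "i \<in> J" "j \<in> J" for i j
    by (intro prefix_bounded_mult w b that)
  let ?mixed = "\<lambda>i \<omega>. 2 * (w \<omega> * a \<omega>) * b i \<omega> * f (\<omega> i)"
  let ?square = "\<lambda>i j \<omega>. w \<omega> * b i \<omega> * b j \<omega> * f (\<omega> i) * f (\<omega> j)"
  have expand: "w \<omega> * (a \<omega> + (\<Sum>i\<in>J. b i \<omega> * f (\<omega> i)))\<^sup>2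
      = w \<omega> * (a \<omega>)\<^sup>2 + (\<Sum>i\<in>J. ?mixed i \<omega>) + (\<Sum>i\<in>J. \<Sum>j\<in>J. ?square i j \<omega>)" for \<omega>
    using square_add_sum_expand[where w="w \<omega>" and a="a \<omega>" and J=J and x="\<lambda>i. b i \<omega> * f (\<omega> i)"]
    by (simp add: mult.assoc mult.left_commute)
  have int_wa: "integrable Samples (\<lambda>\<omega>. w \<omega> * (a \<omega>)\<^sup>2)"
    using integrable_prefix_bounded[OF wa] .
  have int_mixed: "integrable Samples (?mixed i)" if "i \<in> J" for i
    using integrable_prefix_mult_components[OF wab[OF that] f(1), where g="\<lambda>_. 1" and i=i and j=i]
      continuous_imp_unit_bounded[of "\<lambda>_. 1"] by simp
  have int_square: "integrable Samples (?square i j)" if "i \<in> J" "j \<in> J" for i j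
    using integrable_prefix_mult_components[OF wbb[OF that] f(1) f(1)] .
  have mixed: "(\<integral>\<omega>. ?mixed i \<omega> \<partial>Samples) = 0" if "i \<in> J" for i
    using integral_prefix_mult_component[OF wab[OF that] J(2)[OF that] f(1)] f(2) by simp
  have square: "(\<integral>\<omega>. ?square i j \<omega> \<partial>Samples)
      = (if i = j then expectation (\<lambda>x. f x * f x) * (\<integral>\<omega>. w \<omega> * (b i \<omega>)\<^sup>2 \<partial>Samples) else 0)"
    if "i \<in> J" "j \<in> J" for i j
    using integral_prefix_mult_centered_components[OF wbb[OF that] J(2)[OF that(1)] J(2)[OF that(2)] f]
    by (simp add: mult.assoc power2_eq_square)
  have "integrable Samples (\<lambda>\<omega>. w \<omega> * (a \<omega> + (\<Sum>i\<in>J. b i \<omega> * f (\<omega> i)))\<^sup>2)"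
    unfolding expand using int_wa int_mixed int_square by auto
  moreover have "(\<integral>\<omega>. w \<omega> * (a \<omega> + (\<Sum>i\<in>J. b i \<omega> * f (\<omega> i)))\<^sup>2 \<partial>Samples)
      = (\<integral>\<omega>. w \<omega> * (a \<omega>)\<^sup>2 \<partial>Samples) + (\<Sum>i\<in>J. \<integral>\<omega>. ?mixed i \<omega> \<partial>Samples)
        + (\<Sum>i\<in>J. \<Sum>j\<in>J. \<integral>\<omega>. ?square i j \<omega> \<partial>Samples)"
    unfolding expand using int_wa int_mixed int_square by (simp add: integrable_sum integral_sum)
  moreover have "\<dots> = (\<integral>\<omega>. w \<omega> * (a \<omega>)\<^sup>2 \<partial>Samples)
      + expectation (\<lambda>x. f x * f x) * (\<Sum>i\<in>J. \<integral>\<omega>. w \<omega> * (b i \<omega>)\<^sup>2 \<partial>Samples)"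
    using mixed square J(1) by (simp add: sum_distrib_left)
  ultimately show ?thesis
    by (simp add: has_bochner_integral_iff)
qed

lemma integral_square_sum_components:
  assumes "finite J" "unit_bounded f" "expectation f = 0"
  shows "(\<integral>\<omega>. (\<Sum>i\<in>J. f (\<omega> i))\<^sup>2 \<partial>Samples) = real (card J) * expectation (\<lambda>x. f x * f x)"
  using has_bochner_integral_weighted_square[of 0 "\<lambda>_. 1" "\<lambda>_. 0" J "\<lambda>_ _. 1" f]
    assms prefix_bounded_const PS.P.prob_space
  by (simp add: has_bochner_integral_iff)

definition \<mu> :: real where
  "\<mu> = expectation (\<lambda>x. x)"

definition \<sigma>2 :: real where
  "\<sigma>2 = variance (\<lambda>x. x)"

lemma \<mu>_bounds: "0 \<le> \<mu>" "\<mu> \<le> 1"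
proof -
  have int: "integrable D (\<lambda>x. x)"
    by (intro integrable_unit_bounded continuous_imp_unit_bounded continuous_intros)
  show "0 \<le> \<mu>"
    unfolding \<mu>_def by (rule integral_nonneg_AE) (use AE_unit_interval in auto)
  have "expectation (\<lambda>x. x) \<le> expectation (\<lambda>_. 1)"
    by (rule integral_mono_AE) (use AE_unit_interval int in auto)
  then show "\<mu> \<le> 1"
    unfolding \<mu>_def using prob_space by simp
qed

lemma AE_abs_dev_le_1: "AE x in D. \<bar>x - \<mu>\<bar> \<le> 1"
  using AE_unit_interval by eventually_elim (use \<mu>_bounds in auto)

lemma integrable_dev_power: "integrable D (\<lambda>x. (x - \<mu>) ^ k)"
  by (intro integrable_unit_bounded continuous_imp_unit_bounded continuous_intros)

lemma \<sigma>2_eq: "\<sigma>2 = expectation (\<lambda>x. (x - \<mu>)\<^sup>2)"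
  unfolding \<sigma>2_def \<mu>_def ..

lemma \<sigma>2_bounds: "0 \<le> \<sigma>2" "\<sigma>2 \<le> 1"
proof -
  show "0 \<le> \<sigma>2"
    unfolding \<sigma>2_eq by (rule integral_nonneg_AE) auto
  have "expectation (\<lambda>x. (x - \<mu>)\<^sup>2) \<le> expectation (\<lambda>_. 1)"
  proof (rule integral_mono_AE)
    show "AE x in D. (x - \<mu>)\<^sup>2 \<le> 1"
      using AE_abs_dev_le_1 by eventually_elim (simp add: abs_square_le_1)
  qed (use integrable_dev_power in auto)
  then show "\<sigma>2 \<le> 1"
    unfolding \<sigma>2_eq using prob_space by simp
qed

lemma expectation_dev: "expectation (\<lambda>x. x - \<mu>) = 0"
  using integrable_dev_power[of 1] integrable_unit_bounded continuous_imp_unit_bounded[of "\<lambda>x. x"]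
  by (simp add: \<mu>_def prob_space)

lemma expectation_dev_square_centered: "expectation (\<lambda>x. (x - \<mu>)\<^sup>2 - \<sigma>2) = 0"
  using integrable_dev_power[of 2] by (simp add: \<sigma>2_eq prob_space)

lemma expectation_dev_square_centered_square_le:
  "expectation (\<lambda>x. ((x - \<mu>)\<^sup>2 - \<sigma>2) * ((x - \<mu>)\<^sup>2 - \<sigma>2)) \<le> \<sigma>2"
proof -
  have "((x - \<mu>)\<^sup>2 - \<sigma>2) * ((x - \<mu>)\<^sup>2 - \<sigma>2) = (x - \<mu>) ^ 4 - (2 * \<sigma>2) * (x - \<mu>)\<^sup>2 + \<sigma>2 * \<sigma>2" for x
    by (simp add: algebra_simps power2_eq_square power4_eq_xxxx)
  then have "expectation (\<lambda>x. ((x - \<mu>)\<^sup>2 - \<sigma>2) * ((x - \<mu>)\<^sup>2 - \<sigma>2))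
      = expectation (\<lambda>x. (x - \<mu>) ^ 4) - \<sigma>2 * \<sigma>2"
    using integrable_dev_power[of 2] integrable_dev_power[of 4] prob_space
    by (simp add: \<sigma>2_eq[symmetric])
  moreover have "expectation (\<lambda>x. (x - \<mu>) ^ 4) \<le> \<sigma>2"
    unfolding \<sigma>2_eq
  proof (rule integral_mono_AE)
    show "AE x in D. (x - \<mu>) ^ 4 \<le> (x - \<mu>)\<^sup>2"
      using AE_abs_dev_le_1
    proof eventually_elim
      fix x assume "\<bar>x - \<mu>\<bar> \<le> 1"
      then have "(x - \<mu>)\<^sup>2 * (x - \<mu>)\<^sup>2 \<le> 1 * (x - \<mu>)\<^sup>2"
        by (intro mult_right_mono) (auto simp: abs_square_le_1)
      then show "(x - \<mu>) ^ 4 \<le> (x - \<mu>)\<^sup>2"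
        by (simp add: power4_eq_xxxx power2_eq_square)
    qed
  qed (use integrable_dev_power in auto)
  ultimately show ?thesis
    using mult_nonneg_nonneg[OF \<sigma>2_bounds(1) \<sigma>2_bounds(1)] by linarith
qed

definition dev_sum :: "nat \<Rightarrow> (nat \<Rightarrow> real) \<Rightarrow> real" where
  "dev_sum n \<omega> = (\<Sum>i<n. \<omega> i - \<mu>)"

definition square_dev_sum :: "nat \<Rightarrow> (nat \<Rightarrow> real) \<Rightarrow> real" where
  "square_dev_sum n \<omega> = (\<Sum>i<n. (\<omega> i - \<mu>)\<^sup>2)"

lemma prefix_bounded_dev_sum: "prefix_bounded n (dev_sum n)"
  unfolding dev_sum_def[abs_def]
  by (intro prefix_bounded_sum_components continuous_imp_unit_bounded continuous_intros)

lemma prefix_bounded_square_dev_sum: "prefix_bounded n (square_dev_sum n)"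
  unfolding square_dev_sum_def[abs_def]
  by (intro prefix_bounded_sum_components continuous_imp_unit_bounded continuous_intros)

lemma square_dev_sum_decomp:
  "0 < n \<Longrightarrow> square_dev_sum n \<omega> = (real n - 1) * emp_var n \<omega> + (dev_sum n \<omega>)\<^sup>2 / real n"
  using sum_square_dev_decomp[of n \<omega> \<mu>]
  unfolding square_dev_sum_def dev_sum_def emp_var_def by (cases "n = 1") auto

lemma integral_dev_sum_square: "(\<integral>\<omega>. (dev_sum n \<omega>)\<^sup>2 \<partial>Samples) = real n * \<sigma>2"
  using integral_square_sum_components[of "{..<n}" "\<lambda>x. x - \<mu>"] expectation_dev
    continuous_imp_unit_bounded[of "\<lambda>x. x - \<mu>"]
  unfolding dev_sum_def by (simp add: \<sigma>2_eq power2_eq_square continuous_intros)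

lemma integral_square_dev_sum: "(\<integral>\<omega>. square_dev_sum n \<omega> \<partial>Samples) = real n * \<sigma>2"
proof -
  have "(\<integral>\<omega>. square_dev_sum n \<omega> \<partial>Samples) = (\<Sum>i<n. \<integral>\<omega>. (\<omega> i - \<mu>)\<^sup>2 \<partial>Samples)"
    unfolding square_dev_sum_def
    by (rule Bochner_Integration.integral_sum) (rule integrable_component[OF integrable_dev_power])
  also have "\<dots> = real n * \<sigma>2"
    using integral_component[of "\<lambda>x. (x - \<mu>)\<^sup>2"] integrable_dev_power[of 2] by (simp add: \<sigma>2_eq)
  finally show ?thesis .
qed

lemma integral_square_dev_sum_centered_square_le:
  "(\<integral>\<omega>. (square_dev_sum n \<omega> - real n * \<sigma>2)\<^sup>2 \<partial>Samples) \<le> real n * \<sigma>2"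
proof -
  have "square_dev_sum n \<omega> - real n * \<sigma>2 = (\<Sum>i<n. (\<omega> i - \<mu>)\<^sup>2 - \<sigma>2)" for \<omega>
    unfolding square_dev_sum_def by (simp add: sum_subtractf)
  then have "(\<integral>\<omega>. (square_dev_sum n \<omega> - real n * \<sigma>2)\<^sup>2 \<partial>Samples)
      = real n * expectation (\<lambda>x. ((x - \<mu>)\<^sup>2 - \<sigma>2) * ((x - \<mu>)\<^sup>2 - \<sigma>2))"
    using integral_square_sum_components[of "{..<n}" "\<lambda>x. (x - \<mu>)\<^sup>2 - \<sigma>2"]
      expectation_dev_square_centered continuous_imp_unit_bounded[of "\<lambda>x. (x - \<mu>)\<^sup>2 - \<sigma>2"]
    by (simp add: continuous_intros)
  also have "\<dots> \<le> real n * \<sigma>2"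
    using expectation_dev_square_centered_square_le by (intro mult_left_mono) auto
  finally show ?thesis .
qed

definition concentrated :: "nat \<Rightarrow> (nat \<Rightarrow> real) \<Rightarrow> bool" where
  "concentrated m \<omega> \<longleftrightarrow> real m * \<sigma>2 / 2 \<le> square_dev_sum m \<omega> \<and> (dev_sum m \<omega>)\<^sup>2 \<le> (real m)\<^sup>2 * \<sigma>2 / 4"

lemma prefix_measurable_concentrated: "prefix_measurable m (count_space UNIV) (concentrated m)"
proof -
  have [measurable]: "dev_sum m \<in> borel_measurable (PiM {..<m} (\<lambda>_. D))"
      "square_dev_sum m \<in> borel_measurable (PiM {..<m} (\<lambda>_. D))"
    using prefix_bounded_dev_sum prefix_bounded_square_dev_sum
    unfolding prefix_bounded_def prefix_measurable_def by blast+
  have "Measurable.pred (PiM {..<m} (\<lambda>_. D)) (concentrated m)"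
    unfolding concentrated_def[abs_def] by measurable
  then show ?thesis
    using prefix_bounded_dev_sum prefix_bounded_square_dev_sum
    unfolding prefix_measurable_def prefix_bounded_def concentrated_def by simp
qed

lemma emp_var_ge_if_concentrated:
  assumes "0 < m" "concentrated m \<omega>"
  shows "(real m - 1) * (\<sigma>2 / 4) \<le> (real m - 1) * emp_var m \<omega>"
proof -
  have "(dev_sum m \<omega>)\<^sup>2 / real m \<le> ((real m)\<^sup>2 * \<sigma>2 / 4) / real m"
    using assms unfolding concentrated_def by (intro divide_right_mono) auto
  also have "\<dots> = real m * \<sigma>2 / 4"
    using assms(1) by (simp add: power2_eq_square)
  finally have "real m * \<sigma>2 / 4 \<le> square_dev_sum m \<omega> - (dev_sum m \<omega>)\<^sup>2 / real m"
    using assms(2) unfolding concentrated_def by linarith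
  moreover have "(real m - 1) * (\<sigma>2 / 4) \<le> real m * \<sigma>2 / 4"
    using \<sigma>2_bounds by (simp add: field_simps)
  ultimately show ?thesis
    using square_dev_sum_decomp[OF assms(1), of \<omega>] by linarith
qed

lemma not_concentrated_imp:
  assumes "0 < m" "0 < \<sigma>2" "\<not> concentrated m \<omega>"
  shows "(real m * \<sigma>2 / 2)\<^sup>2 \<le> (square_dev_sum m \<omega> - real m * \<sigma>2)\<^sup>2
    \<or> (real m)\<^sup>2 * \<sigma>2 / 4 \<le> (dev_sum m \<omega>)\<^sup>2"
proof (cases "(real m)\<^sup>2 * \<sigma>2 / 4 \<le> (dev_sum m \<omega>)\<^sup>2")
  case False
  then have "real m * \<sigma>2 / 2 \<le> \<bar>square_dev_sum m \<omega> - real m * \<sigma>2\<bar>"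
    using assms(3) unfolding concentrated_def by (auto split: abs_split)
  then have "(real m * \<sigma>2 / 2)\<^sup>2 \<le> (square_dev_sum m \<omega> - real m * \<sigma>2)\<^sup>2"
    using assms(1,2) by (metis abs_le_square_iff abs_of_nonneg less_imp_le divide_pos_pos
        mult_pos_pos of_nat_0_less_iff zero_less_numeral)
  then show ?thesis ..
qed simp

lemma prob_not_concentrated_le:
  assumes "0 < m" "0 < \<sigma>2"
  shows "PS.P.prob {\<omega> \<in> space Samples. \<not> concentrated m \<omega>} \<le> 4 / (real m * \<sigma>2) + 4 / real m"
proof -
  let ?c1 = "(real m * \<sigma>2 / 2)\<^sup>2" and ?c2 = "(real m)\<^sup>2 * \<sigma>2 / 4"
  have pos: "0 < ?c1" "0 < ?c2"
    using assms by auto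
  have [measurable]: "dev_sum m \<in> borel_measurable Samples" "square_dev_sum m \<in> borel_measurable Samples"
    using prefix_bounded_dev_sum prefix_bounded_square_dev_sum measurable_prefix_measurable
    unfolding prefix_bounded_def by blast+
  have int_dev: "integrable Samples (\<lambda>\<omega>. (dev_sum m \<omega>)\<^sup>2)"
    using integrable_prefix_bounded[OF prefix_bounded_mult[OF prefix_bounded_dev_sum prefix_bounded_dev_sum]]
    by (simp add: power2_eq_square)
  have int_square_dev: "integrable Samples (\<lambda>\<omega>. (square_dev_sum m \<omega> - real m * \<sigma>2)\<^sup>2)"
    unfolding power2_eq_square diff_conv_add_uminus
    using prefix_bounded_square_dev_sum[of m] prefix_bounded_const[of m "- (real m * \<sigma>2)"]
    by (intro integrable_prefix_bounded prefix_bounded_mult prefix_bounded_add)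
  have "{\<omega> \<in> space Samples. \<not> concentrated m \<omega>}
      \<subseteq> {\<omega> \<in> space Samples. ?c1 \<le> (square_dev_sum m \<omega> - real m * \<sigma>2)\<^sup>2}
        \<union> {\<omega> \<in> space Samples. ?c2 \<le> (dev_sum m \<omega>)\<^sup>2}"
    using not_concentrated_imp[OF assms] by auto
  then have "PS.P.prob {\<omega> \<in> space Samples. \<not> concentrated m \<omega>}
      \<le> PS.P.prob ({\<omega> \<in> space Samples. ?c1 \<le> (square_dev_sum m \<omega> - real m * \<sigma>2)\<^sup>2}
        \<union> {\<omega> \<in> space Samples. ?c2 \<le> (dev_sum m \<omega>)\<^sup>2})"
    by (intro PS.P.finite_measure_mono) measurable
  also have "\<dots> \<le> PS.P.prob {\<omega> \<in> space Samples. ?c1 \<le> (square_dev_sum m \<omega> - real m * \<sigma>2)\<^sup>2}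
        + PS.P.prob {\<omega> \<in> space Samples. ?c2 \<le> (dev_sum m \<omega>)\<^sup>2}"
    by (intro measure_Un_le) measurable
  also have "\<dots> \<le> (\<integral>\<omega>. (square_dev_sum m \<omega> - real m * \<sigma>2)\<^sup>2 \<partial>Samples) / ?c1
        + (\<integral>\<omega>. (dev_sum m \<omega>)\<^sup>2 \<partial>Samples) / ?c2"
    using int_dev int_square_dev pos
    by (intro add_mono integral_Markov_inequality_measure[where A="space Samples"]) auto
  also have "\<dots> \<le> (real m * \<sigma>2) / ?c1 + (real m * \<sigma>2) / ?c2"
    using integral_square_dev_sum_centered_square_le pos
    by (simp add: integral_dev_sum_square divide_right_mono)
  also have "\<dots> = 4 / (real m * \<sigma>2) + 4 / real m"
    using assms by (simp add: field_simps power2_eq_square)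
  finally show ?thesis .
qed

end

locale mean_estimator = unit_interval_distr +
  fixes \<epsilon> :: real
  assumes \<epsilon>_pos: "0 < \<epsilon>"
begin

abbreviation n :: nat where
  "n \<equiv> T1 \<epsilon>"

abbreviation T2_max :: nat where
  "T2_max \<equiv> nat \<lceil>30 / \<epsilon>\<^sup>2\<rceil>"

lemma two_le_n: "2 \<le> n"
  using two_le_T1[OF \<epsilon>_pos] .

lemma measurable_T2[measurable]: "T2 \<epsilon> \<in> measurable (PiM {..<n} (\<lambda>_. D)) (count_space UNIV)"
  unfolding T2_def emp_var_def emp_mean_def by measurable

lemma prefix_measurable_T2: "prefix_measurable n (count_space UNIV) (T2 \<epsilon>)"
  unfolding prefix_measurable_def using measurable_T2 T2_restrict by blast

lemma measurable_num_samples[measurable]: "num_samples \<epsilon> \<in> measurable Samples (count_space UNIV)"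
  unfolding num_samples_def
  using measurable_prefix_measurable[OF prefix_measurable_T2] by measurable

lemma borel_measurable_estimate[measurable]: "estimate \<epsilon> \<in> borel_measurable Samples"
  unfolding estimate_def
  by (rule measurable_compose_countable[where f="\<lambda>m \<omega>. emp_mean m \<omega>" and g="num_samples \<epsilon>"])
     (unfold emp_mean_def, measurable)

definition sampled :: "nat \<Rightarrow> (nat \<Rightarrow> real) \<Rightarrow> real" where
  "sampled i \<omega> = (if i < num_samples \<epsilon> \<omega> then 1 else 0)"

text \<open>On samples in \<open>[0, 1]\<close> the empirical variance is at most \<open>1/2\<close>, so \<open>T2 \<le> T2_max\<close> and
  this finite sum contains every sample drawn after the first block.\<close>

definition extra_dev_sum :: "(nat \<Rightarrow> real) \<Rightarrow> real" where
  "extra_dev_sum \<omega> = (\<Sum>i\<in>{n..<n + T2_max}. sampled i \<omega> * (\<omega> i - \<mu>))"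

definition weight :: "((nat \<Rightarrow> real) \<Rightarrow> bool) \<Rightarrow> (nat \<Rightarrow> real) \<Rightarrow> real" where
  "weight G \<omega> = (if unit_cube {..<n} \<omega> \<and> G \<omega> then 1 / (\<epsilon>\<^sup>2 * (real (num_samples \<epsilon> \<omega>))\<^sup>2) else 0)"

lemma prefix_bounded_sampled: "prefix_bounded n (sampled i)"
proof -
  have "sampled i \<in> borel_measurable (PiM {..<n} (\<lambda>_. D))"
    unfolding sampled_def[abs_def] num_samples_def by measurable
  moreover have "\<bar>sampled i \<omega>\<bar> \<le> 1" for \<omega>
    unfolding sampled_def by simp
  ultimately show ?thesis
    unfolding prefix_bounded_def prefix_measurable_def sampled_def num_samples_def T2_restrict by auto
qed

lemma weight_nonneg: "0 \<le> weight G \<omega>"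
  unfolding weight_def by simp

lemma weight_le: "weight G \<omega> \<le> 1 / \<epsilon>\<^sup>2"
proof -
  have "1 \<le> (real (num_samples \<epsilon> \<omega>))\<^sup>2"
    using two_le_n by (simp add: num_samples_def)
  then have "\<epsilon>\<^sup>2 * 1 \<le> \<epsilon>\<^sup>2 * (real (num_samples \<epsilon> \<omega>))\<^sup>2"
    by (intro mult_left_mono) auto
  then have "1 / (\<epsilon>\<^sup>2 * (real (num_samples \<epsilon> \<omega>))\<^sup>2) \<le> 1 / \<epsilon>\<^sup>2"
    using \<epsilon>_pos by (intro frac_le) auto
  then show ?thesis
    unfolding weight_def using \<epsilon>_pos by auto
qed

lemma prefix_bounded_weight:
  assumes "prefix_measurable n (count_space UNIV) G"
  shows "prefix_bounded n (weight G)"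
proof -
  have [measurable]: "Measurable.pred (PiM {..<n} (\<lambda>_. D)) G"
    using assms unfolding prefix_measurable_def by blast
  have "weight G \<in> borel_measurable (PiM {..<n} (\<lambda>_. D))"
    unfolding weight_def[abs_def] num_samples_def of_nat_add by measurable
  moreover have "weight G (restrict \<omega> {..<n}) = weight G \<omega>" for \<omega>
    using assms unfolding weight_def num_samples_def T2_restrict unit_cube_def prefix_measurable_def
    by simp
  ultimately show ?thesis
    unfolding prefix_bounded_def prefix_measurable_def
    using weight_nonneg weight_le by (intro conjI exI[of _ "1 / \<epsilon>\<^sup>2"]) auto
qed

lemma num_samples_le_on_unit_cube: "unit_cube {..<n} \<omega> \<Longrightarrow> num_samples \<epsilon> \<omega> \<le> n + T2_max"
  using T2_le_on_unit_cube[OF \<epsilon>_pos] by (simp add: num_samples_def)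

lemma estimate_error:
  assumes "unit_cube {..<n} \<omega>"
  shows "estimate \<epsilon> \<omega> - \<mu> = (dev_sum n \<omega> + extra_dev_sum \<omega>) / real (num_samples \<epsilon> \<omega>)"
proof -
  let ?N = "num_samples \<epsilon> \<omega>"
  have N_pos: "0 < real ?N"
    using two_le_n by (simp add: num_samples_def)
  have "extra_dev_sum \<omega> = (\<Sum>i\<in>{n..<n + T2_max}. if i < ?N then \<omega> i - \<mu> else 0)"
    unfolding extra_dev_sum_def sampled_def by (intro sum.cong) auto
  also have "\<dots> = (\<Sum>i\<in>{n..<?N}. \<omega> i - \<mu>)"
    using sum_if_less_atLeastLessThan[OF num_samples_le_on_unit_cube[OF assms]] .
  finally have "dev_sum n \<omega> + extra_dev_sum \<omega> = (\<Sum>i<?N. \<omega> i - \<mu>)"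
    unfolding dev_sum_def num_samples_def
    by (simp add: lessThan_atLeast0 sum.atLeastLessThan_concat)
  then show ?thesis
    using N_pos by (simp add: estimate_def emp_mean_def sum_subtractf field_simps)
qed

lemma one_le_weighted_error:
  assumes "unit_cube {..<n} \<omega>" "G \<omega>" "\<epsilon> < \<bar>estimate \<epsilon> \<omega> - \<mu>\<bar>"
  shows "1 \<le> weight G \<omega> * (dev_sum n \<omega> + extra_dev_sum \<omega>)\<^sup>2"
proof -
  let ?N = "real (num_samples \<epsilon> \<omega>)" and ?S = "dev_sum n \<omega> + extra_dev_sum \<omega>"
  have N_pos: "0 < ?N"
    using two_le_n by (simp add: num_samples_def)
  have "\<epsilon> * ?N < \<bar>?S\<bar>"
    using assms(3) N_pos unfolding estimate_error[OF assms(1)] by (simp add: field_simps)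
  then have "(\<epsilon> * ?N)\<^sup>2 < ?S\<^sup>2"
    using \<epsilon>_pos N_pos by (metis abs_le_square_iff abs_of_pos linorder_not_le mult_pos_pos)
  then show ?thesis
    using assms(1,2) \<epsilon>_pos N_pos by (simp add: weight_def power_mult_distrib)
qed

lemma sum_sampled_square:
  assumes "unit_cube {..<n} \<omega>"
  shows "(\<Sum>i\<in>{n..<n + T2_max}. (sampled i \<omega>)\<^sup>2) = real (T2 \<epsilon> \<omega>)"
proof -
  have "(\<Sum>i\<in>{n..<n + T2_max}. (sampled i \<omega>)\<^sup>2)
      = (\<Sum>i\<in>{n..<n + T2_max}. if i < num_samples \<epsilon> \<omega> then 1 else 0)"
    unfolding sampled_def by (intro sum.cong) auto
  also have "\<dots> = (\<Sum>i\<in>{n..<num_samples \<epsilon> \<omega>}. 1)"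
    using sum_if_less_atLeastLessThan[OF num_samples_le_on_unit_cube[OF assms]] .
  finally show ?thesis
    by (simp add: num_samples_def)
qed

lemma has_bochner_integral_weighted_error:
  assumes "prefix_measurable n (count_space UNIV) G"
  shows "has_bochner_integral Samples (\<lambda>\<omega>. weight G \<omega> * (dev_sum n \<omega> + extra_dev_sum \<omega>)\<^sup>2)
    ((\<integral>\<omega>. weight G \<omega> * (dev_sum n \<omega>)\<^sup>2 \<partial>Samples) + \<sigma>2 * (\<integral>\<omega>. weight G \<omega> * real (T2 \<epsilon> \<omega>) \<partial>Samples))"
proof -
  let ?J = "{n..<n + T2_max}"
  have "(\<Sum>i\<in>?J. \<integral>\<omega>. weight G \<omega> * (sampled i \<omega>)\<^sup>2 \<partial>Samples)
      = (\<integral>\<omega>. (\<Sum>i\<in>?J. weight G \<omega> * (sampled i \<omega>)\<^sup>2) \<partial>Samples)"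
    using prefix_bounded_weight[OF assms] prefix_bounded_sampled
    by (intro Bochner_Integration.integral_sum[symmetric] integrable_prefix_bounded
        prefix_bounded_mult) (auto simp: power2_eq_square intro: prefix_bounded_mult)
  also have "\<dots> = (\<integral>\<omega>. weight G \<omega> * real (T2 \<epsilon> \<omega>) \<partial>Samples)"
    using sum_sampled_square
    by (intro Bochner_Integration.integral_cong) (auto simp: weight_def sum_distrib_left[symmetric])
  finally have "(\<Sum>i\<in>?J. \<integral>\<omega>. weight G \<omega> * (sampled i \<omega>)\<^sup>2 \<partial>Samples)
      = (\<integral>\<omega>. weight G \<omega> * real (T2 \<epsilon> \<omega>) \<partial>Samples)" .
  then show ?thesis
    using has_bochner_integral_weighted_square[where b=sampled and J="?J" and f="\<lambda>x. x - \<mu>",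
        OF prefix_bounded_weight[OF assms] prefix_bounded_dev_sum prefix_bounded_sampled]
      expectation_dev continuous_imp_unit_bounded[of "\<lambda>x. x - \<mu>"]
    unfolding extra_dev_sum_def
    by (simp add: \<sigma>2_eq power2_eq_square continuous_intros)
qed

lemma failure_prob_le_weighted:
  assumes G: "prefix_measurable n (count_space UNIV) G"
  shows "PS.P.prob {\<omega> \<in> space Samples. \<epsilon> < \<bar>estimate \<epsilon> \<omega> - \<mu>\<bar>}
    \<le> (\<integral>\<omega>. weight G \<omega> * (dev_sum n \<omega>)\<^sup>2 \<partial>Samples)
      + \<sigma>2 * (\<integral>\<omega>. weight G \<omega> * real (T2 \<epsilon> \<omega>) \<partial>Samples)
      + PS.P.prob {\<omega> \<in> space Samples. \<not> G \<omega>}"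
proof -
  let ?\<Phi> = "\<lambda>\<omega>. weight G \<omega> * (dev_sum n \<omega> + extra_dev_sum \<omega>)\<^sup>2"
  have [measurable]: "Measurable.pred Samples G"
    using measurable_prefix_measurable[OF G] .
  have \<Phi>: "integrable Samples ?\<Phi>"
    "(\<integral>\<omega>. ?\<Phi> \<omega> \<partial>Samples) = (\<integral>\<omega>. weight G \<omega> * (dev_sum n \<omega>)\<^sup>2 \<partial>Samples)
      + \<sigma>2 * (\<integral>\<omega>. weight G \<omega> * real (T2 \<epsilon> \<omega>) \<partial>Samples)"
    using has_bochner_integral_weighted_error[OF G] by (auto simp: has_bochner_integral_iff)
  then have [measurable]: "?\<Phi> \<in> borel_measurable Samples"
    by blast
  have "AE \<omega> in Samples. \<omega> \<in> {\<omega> \<in> space Samples. \<epsilon> < \<bar>estimate \<epsilon> \<omega> - \<mu>\<bar>}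
      \<longrightarrow> \<omega> \<in> {\<omega> \<in> space Samples. 1 \<le> ?\<Phi> \<omega>} \<union> {\<omega> \<in> space Samples. \<not> G \<omega>}"
    using AE_unit_cube by eventually_elim (auto simp: unit_cube_def intro!: one_le_weighted_error)
  then have "PS.P.prob {\<omega> \<in> space Samples. \<epsilon> < \<bar>estimate \<epsilon> \<omega> - \<mu>\<bar>}
      \<le> PS.P.prob ({\<omega> \<in> space Samples. 1 \<le> ?\<Phi> \<omega>} \<union> {\<omega> \<in> space Samples. \<not> G \<omega>})"
    by (intro PS.P.finite_measure_mono_AE) measurable
  also have "\<dots> \<le> PS.P.prob {\<omega> \<in> space Samples. 1 \<le> ?\<Phi> \<omega>} + PS.P.prob {\<omega> \<in> space Samples. \<not> G \<omega>}"
    by (intro measure_Un_le) measurable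
  also have "PS.P.prob {\<omega> \<in> space Samples. 1 \<le> ?\<Phi> \<omega>} \<le> (\<integral>\<omega>. ?\<Phi> \<omega> \<partial>Samples) / 1"
    by (intro integral_Markov_inequality_measure[OF \<Phi>(1), where A="space Samples"])
       (auto simp: weight_nonneg)
  finally show ?thesis
    unfolding \<Phi>(2) by simp
qed

lemma weight_le_if_num_samples_ge:
  assumes L: "0 < L" "\<And>\<omega>. unit_cube {..<n} \<omega> \<Longrightarrow> G \<omega> \<Longrightarrow> L \<le> real (num_samples \<epsilon> \<omega>)"
  shows "weight G \<omega> \<le> 1 / (\<epsilon>\<^sup>2 * (L * n))"
proof (cases "unit_cube {..<n} \<omega> \<and> G \<omega>")
  case True
  let ?N = "real (num_samples \<epsilon> \<omega>)"
  have "L * n \<le> ?N * ?N"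
    using L True two_le_n by (intro mult_mono) (auto simp: num_samples_def)
  then have "\<epsilon>\<^sup>2 * (L * n) \<le> \<epsilon>\<^sup>2 * ?N\<^sup>2"
    unfolding power2_eq_square[of ?N] by (intro mult_left_mono) auto
  then show ?thesis
    using True L two_le_n \<epsilon>_pos by (simp add: weight_def frac_le)
qed (use L two_le_n \<epsilon>_pos in \<open>auto simp: weight_def\<close>)

lemma weight_mult_T2_le_if_num_samples_ge:
  assumes L: "0 < L" "\<And>\<omega>. unit_cube {..<n} \<omega> \<Longrightarrow> G \<omega> \<Longrightarrow> L \<le> real (num_samples \<epsilon> \<omega>)"
  shows "weight G \<omega> * real (T2 \<epsilon> \<omega>) \<le> 1 / (\<epsilon>\<^sup>2 * L)"
proof (cases "unit_cube {..<n} \<omega> \<and> G \<omega>")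
  case True
  let ?N = "real (num_samples \<epsilon> \<omega>)"
  have N_pos: "0 < ?N"
    using two_le_n by (simp add: num_samples_def)
  have "weight G \<omega> * real (T2 \<epsilon> \<omega>) \<le> ?N / (\<epsilon>\<^sup>2 * ?N\<^sup>2)"
    using True \<epsilon>_pos by (simp add: weight_def num_samples_def divide_right_mono)
  also have "\<dots> = 1 / (\<epsilon>\<^sup>2 * ?N)"
    using N_pos by (simp add: power2_eq_square)
  also have "\<dots> \<le> 1 / (\<epsilon>\<^sup>2 * L)"
    using True L \<epsilon>_pos N_pos by (intro divide_left_mono mult_left_mono mult_pos_pos) auto
  finally show ?thesis .
qed (use L \<epsilon>_pos in \<open>auto simp: weight_def\<close>)

lemma failure_prob_le:
  assumes G: "prefix_measurable n (count_space UNIV) G"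
    and L: "0 < L" "\<And>\<omega>. unit_cube {..<n} \<omega> \<Longrightarrow> G \<omega> \<Longrightarrow> L \<le> real (num_samples \<epsilon> \<omega>)"
  shows "PS.P.prob {\<omega> \<in> space Samples. \<epsilon> < \<bar>estimate \<epsilon> \<omega> - \<mu>\<bar>}
    \<le> 2 * \<sigma>2 / (\<epsilon>\<^sup>2 * L) + PS.P.prob {\<omega> \<in> space Samples. \<not> G \<omega>}"
proof -
  have n_pos: "0 < real n"
    using two_le_n by simp
  have "(\<integral>\<omega>. weight G \<omega> * (dev_sum n \<omega>)\<^sup>2 \<partial>Samples)
      \<le> (\<integral>\<omega>. 1 / (\<epsilon>\<^sup>2 * (L * n)) * (dev_sum n \<omega>)\<^sup>2 \<partial>Samples)"
    using integrable_prefix_bounded[OF prefix_bounded_mult[OF prefix_bounded_dev_sum prefix_bounded_dev_sum]]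
    by (intro integral_mono_AE' AE_I2 mult_right_mono weight_le_if_num_samples_ge[OF L])
       (use L n_pos in \<open>auto simp: power2_eq_square weight_nonneg\<close>)
  also have "\<dots> = \<sigma>2 / (\<epsilon>\<^sup>2 * L)"
    using n_pos by (simp add: integral_dev_sum_square)
  finally have dev: "(\<integral>\<omega>. weight G \<omega> * (dev_sum n \<omega>)\<^sup>2 \<partial>Samples) \<le> \<sigma>2 / (\<epsilon>\<^sup>2 * L)" .
  have "(\<integral>\<omega>. weight G \<omega> * real (T2 \<epsilon> \<omega>) \<partial>Samples) \<le> (\<integral>\<omega>. 1 / (\<epsilon>\<^sup>2 * L) \<partial>Samples)"
    by (intro integral_mono_AE' AE_I2 weight_mult_T2_le_if_num_samples_ge[OF L]) (use L in \<open>auto simp: weight_nonneg\<close>)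
  then have "\<sigma>2 * (\<integral>\<omega>. weight G \<omega> * real (T2 \<epsilon> \<omega>) \<partial>Samples) \<le> \<sigma>2 / (\<epsilon>\<^sup>2 * L)"
    using mult_left_mono[OF _ \<sigma>2_bounds(1)] PS.P.prob_space by fastforce
  then have "PS.P.prob {\<omega> \<in> space Samples. \<epsilon> < \<bar>estimate \<epsilon> \<omega> - \<mu>\<bar>}
      \<le> \<sigma>2 / (\<epsilon>\<^sup>2 * L) + \<sigma>2 / (\<epsilon>\<^sup>2 * L) + PS.P.prob {\<omega> \<in> space Samples. \<not> G \<omega>}"
    using failure_prob_le_weighted[OF G] dev by linarith
  also have "\<sigma>2 / (\<epsilon>\<^sup>2 * L) + \<sigma>2 / (\<epsilon>\<^sup>2 * L) = 2 * \<sigma>2 / (\<epsilon>\<^sup>2 * L)"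
    by (metis add_divide_distrib mult_2)
  finally show ?thesis .
qed

lemma ten_le_\<epsilon>_n: "10 \<le> \<epsilon> * real n"
  using T1_lower[OF \<epsilon>_pos] \<epsilon>_pos by (simp add: field_simps)

lemma failure_prob_small_variance:
  assumes "\<sigma>2 \<le> 3 * \<epsilon>"
  shows "PS.P.prob {\<omega> \<in> space Samples. \<epsilon> < \<bar>estimate \<epsilon> \<omega> - \<mu>\<bar>} \<le> 3/5"
proof -
  have "prefix_measurable n (count_space UNIV) (\<lambda>_. True)"
    unfolding prefix_measurable_def by simp
  then have "PS.P.prob {\<omega> \<in> space Samples. \<epsilon> < \<bar>estimate \<epsilon> \<omega> - \<mu>\<bar>} \<le> 2 * \<sigma>2 / (\<epsilon>\<^sup>2 * real n)"
    using failure_prob_le[where G="\<lambda>_. True" and L="real n"] two_le_n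
    by (simp add: num_samples_def)
  also have "\<dots> = 2 * \<sigma>2 / (\<epsilon> * (\<epsilon> * real n))"
    by (simp add: power2_eq_square mult.assoc)
  also have "\<dots> \<le> 2 * (3 * \<epsilon>) / (\<epsilon> * 10)"
    using assms \<sigma>2_bounds \<epsilon>_pos ten_le_\<epsilon>_n by (intro frac_le mult_left_mono) auto
  also have "\<dots> = 3/5"
    using \<epsilon>_pos by simp
  finally show ?thesis .
qed

lemma failure_prob_large_variance:
  assumes "3 * \<epsilon> < \<sigma>2"
  shows "PS.P.prob {\<omega> \<in> space Samples. \<epsilon> < \<bar>estimate \<epsilon> \<omega> - \<mu>\<bar>} \<le> 2/5"
proof -
  have \<sigma>2_pos: "0 < \<sigma>2"
    using assms \<epsilon>_pos by linarith
  have "30 \<le> 3 * (\<epsilon> * real n)"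
    using ten_le_\<epsilon>_n by linarith
  also have "\<dots> = (3 * \<epsilon>) * real n"
    by simp
  also have "\<dots> \<le> \<sigma>2 * real n"
    using assms by (intro mult_right_mono) auto
  finally have n\<sigma>2: "30 \<le> real n * \<sigma>2"
    by (simp add: mult.commute)
  then have n: "30 \<le> real n"
    using \<sigma>2_bounds(2) by (smt (verit) mult_left_le of_nat_0_le_iff)
  have "15 * \<sigma>2 / \<epsilon>\<^sup>2 \<le> real (num_samples \<epsilon> \<omega>)"
    if "unit_cube {..<n} \<omega>" "concentrated n \<omega>" for \<omega>
  proof -
    have "\<sigma>2 / 4 \<le> emp_var n \<omega>"
      using emp_var_ge_if_concentrated[OF _ that(2)] two_le_n by simp
    then have "15 * \<sigma>2 / \<epsilon>\<^sup>2 \<le> 60 * emp_var n \<omega> / \<epsilon>\<^sup>2"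
      by (simp add: divide_right_mono)
    then show ?thesis
      using T2_lower[of \<epsilon> \<omega>] by (simp add: num_samples_def)
  qed
  then have "PS.P.prob {\<omega> \<in> space Samples. \<epsilon> < \<bar>estimate \<epsilon> \<omega> - \<mu>\<bar>}
      \<le> 2 * \<sigma>2 / (\<epsilon>\<^sup>2 * (15 * \<sigma>2 / \<epsilon>\<^sup>2)) + PS.P.prob {\<omega> \<in> space Samples. \<not> concentrated n \<omega>}"
    using \<sigma>2_pos \<epsilon>_pos by (intro failure_prob_le prefix_measurable_concentrated) auto
  also have "\<dots> \<le> 2/15 + (4 / (real n * \<sigma>2) + 4 / real n)"
    using prob_not_concentrated_le[of n] two_le_n \<sigma>2_pos \<epsilon>_pos by simp
  also have "\<dots> \<le> 2/15 + (4/30 + 4/30)"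
    using n\<sigma>2 n by (intro add_mono divide_left_mono) auto
  finally show ?thesis
    by simp
qed

lemma success_prob: "2/5 \<le> PS.P.prob {\<omega> \<in> space Samples. \<bar>estimate \<epsilon> \<omega> - \<mu>\<bar> \<le> \<epsilon>}"
proof -
  have "{\<omega> \<in> space Samples. \<bar>estimate \<epsilon> \<omega> - \<mu>\<bar> \<le> \<epsilon>}
      = space Samples - {\<omega> \<in> space Samples. \<epsilon> < \<bar>estimate \<epsilon> \<omega> - \<mu>\<bar>}"
    by auto
  then have "PS.P.prob {\<omega> \<in> space Samples. \<bar>estimate \<epsilon> \<omega> - \<mu>\<bar> \<le> \<epsilon>}
      = 1 - PS.P.prob {\<omega> \<in> space Samples. \<epsilon> < \<bar>estimate \<epsilon> \<omega> - \<mu>\<bar>}"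
    by (simp add: PS.P.prob_compl)
  moreover have "PS.P.prob {\<omega> \<in> space Samples. \<epsilon> < \<bar>estimate \<epsilon> \<omega> - \<mu>\<bar>} \<le> 3/5"
    using failure_prob_small_variance failure_prob_large_variance by force
  ultimately show ?thesis
    by linarith
qed

lemma num_samples_le_square_dev_sum:
  "real (num_samples \<epsilon> \<omega>) \<le> real n + 1 + 60 / ((real n - 1) * \<epsilon>\<^sup>2) * square_dev_sum n \<omega>"
proof -
  have n1: "1 \<le> real n - 1"
    using two_le_n by simp
  have "(real n - 1) * emp_var n \<omega> \<le> square_dev_sum n \<omega>"
    using square_dev_sum_decomp[of n \<omega>] two_le_n by simp
  then have "emp_var n \<omega> \<le> square_dev_sum n \<omega> / (real n - 1)"
    using n1 by (simp add: field_simps)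
  then have "60 * emp_var n \<omega> / \<epsilon>\<^sup>2 \<le> 60 * (square_dev_sum n \<omega> / (real n - 1)) / \<epsilon>\<^sup>2"
    by (intro divide_right_mono mult_left_mono) auto
  also have "\<dots> = 60 / ((real n - 1) * \<epsilon>\<^sup>2) * square_dev_sum n \<omega>"
    by (simp add: field_simps)
  finally show ?thesis
    using T2_upper[OF \<epsilon>_pos, of \<omega>] unfolding num_samples_def by simp
qed

lemma expected_num_samples_le:
  assumes "\<epsilon> \<le> 1"
  shows "(\<integral>\<^sup>+ \<omega>. ennreal (real (num_samples \<epsilon> \<omega>)) \<partial>Samples) \<le> ennreal (120 * (\<sigma>2 / \<epsilon>\<^sup>2 + 1 / \<epsilon>))"
proof -
  define c where "c = 60 / ((real n - 1) * \<epsilon>\<^sup>2)"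
  have n1: "1 \<le> real n - 1"
    using two_le_n by simp
  have c_nonneg: "0 \<le> c"
    using n1 unfolding c_def by simp
  have num_samples_bound: "real (num_samples \<epsilon> \<omega>) \<le> real n + 1 + c * square_dev_sum n \<omega>" for \<omega>
    using num_samples_le_square_dev_sum unfolding c_def .
  have int: "integrable Samples (square_dev_sum n)"
    using integrable_prefix_bounded[OF prefix_bounded_square_dev_sum] .
  then have int_bound: "integrable Samples (\<lambda>\<omega>. real n + 1 + c * square_dev_sum n \<omega>)"
    by simp
  have "(\<integral>\<^sup>+ \<omega>. ennreal (real (num_samples \<epsilon> \<omega>)) \<partial>Samples)
      \<le> (\<integral>\<^sup>+ \<omega>. ennreal (real n + 1 + c * square_dev_sum n \<omega>) \<partial>Samples)"
    using num_samples_bound by (intro nn_integral_mono ennreal_leI)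
  also have "\<dots> = ennreal (\<integral>\<omega>. real n + 1 + c * square_dev_sum n \<omega> \<partial>Samples)"
    using int_bound c_nonneg by (intro nn_integral_eq_integral)
       (auto simp: square_dev_sum_def sum_nonneg)
  also have "(\<integral>\<omega>. real n + 1 + c * square_dev_sum n \<omega> \<partial>Samples) = real n + 1 + c * (real n * \<sigma>2)"
    using int PS.P.prob_space by (simp add: integral_square_dev_sum)
  also have "\<dots> \<le> 120 * (\<sigma>2 / \<epsilon>\<^sup>2 + 1 / \<epsilon>)"
  proof -
    have "real n + 1 \<le> 3 + 10 / \<epsilon>"
      using T1_upper[OF \<epsilon>_pos] by simp
    also have "\<dots> \<le> 120 / \<epsilon>"
      using \<epsilon>_pos assms by (simp add: field_simps)
    finally have n_le: "real n + 1 \<le> 120 / \<epsilon>" .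
    have "c * real n = 60 * (real n / (real n - 1)) / \<epsilon>\<^sup>2"
      unfolding c_def by (simp add: field_simps)
    also have "\<dots> \<le> 60 * 2 / \<epsilon>\<^sup>2"
      using n1 by (intro divide_right_mono mult_left_mono) (auto simp: field_simps)
    finally have "c * real n * \<sigma>2 \<le> 120 / \<epsilon>\<^sup>2 * \<sigma>2"
      using \<sigma>2_bounds by (intro mult_right_mono) auto
    with n_le show ?thesis
      by (simp add: algebra_simps)
  qed
  finally show ?thesis
    by (simp add: ennreal_leI)
qed

end

lemma mean_estimatorI:
  "prob_space D \<Longrightarrow> sets D = sets borel \<Longrightarrow> (AE x in D. 0 \<le> x \<and> x \<le> 1) \<Longrightarrow> 0 < \<epsilon>
    \<Longrightarrow> mean_estimator D \<epsilon>"
  unfolding mean_estimator_def mean_estimator_axioms_def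
    unit_interval_distr_def unit_interval_distr_axioms_def by blast

theorem lemmaB1:
  shows "(\<forall>(D :: real measure) (\<epsilon> :: real).
            prob_space D \<and> sets D = sets borel \<and> (AE x in D. 0 \<le> x \<and> x \<le> 1) \<and> \<epsilon> > 0 \<longrightarrow>
            measure (PiM UNIV (\<lambda>_::nat. D))
              {\<omega> \<in> space (PiM UNIV (\<lambda>_::nat. D)).
                 \<bar>estimate \<epsilon> \<omega> - prob_space.expectation D (\<lambda>x. x)\<bar> \<le> \<epsilon>} \<ge> 1/4)
       \<and> (\<exists>C :: real. \<forall>(D :: real measure) (\<epsilon> :: real).
            prob_space D \<and> sets D = sets borel \<and> (AE x in D. 0 \<le> x \<and> x \<le> 1) \<and> 0 < \<epsilon> \<and> \<epsilon> \<le> 1 \<longrightarrow>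
            (\<integral>\<^sup>+ \<omega>. ennreal (real (num_samples \<epsilon> \<omega>)) \<partial>(PiM UNIV (\<lambda>_::nat. D)))
              \<le> ennreal (C * (prob_space.variance D (\<lambda>x. x) / \<epsilon>^2 + 1 / \<epsilon>)))"
proof (intro conjI exI[of _ 120] allI impI; elim conjE)
  fix D :: "real measure" and \<epsilon> :: real
  assume D: "prob_space D" "sets D = sets borel" "AE x in D. 0 \<le> x \<and> x \<le> 1" "0 < \<epsilon>"
  interpret mean_estimator D \<epsilon>
    by (rule mean_estimatorI[OF D])
  show "1/4 \<le> measure (PiM UNIV (\<lambda>_::nat. D)) {\<omega> \<in> space (PiM UNIV (\<lambda>_::nat. D)).
      \<bar>estimate \<epsilon> \<omega> - prob_space.expectation D (\<lambda>x. x)\<bar> \<le> \<epsilon>}"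
    using success_prob unfolding \<mu>_def by linarith
next
  fix D :: "real measure" and \<epsilon> :: real
  assume D: "prob_space D" "sets D = sets borel" "AE x in D. 0 \<le> x \<and> x \<le> 1" "0 < \<epsilon>"
    and "\<epsilon> \<le> 1"
  interpret mean_estimator D \<epsilon>
    by (rule mean_estimatorI[OF D])
  show "(\<integral>\<^sup>+ \<omega>. ennreal (real (num_samples \<epsilon> \<omega>)) \<partial>(PiM UNIV (\<lambda>_::nat. D)))
      \<le> ennreal (120 * (prob_space.variance D (\<lambda>x. x) / \<epsilon>^2 + 1 / \<epsilon>))"
    using expected_num_samples_le \<open>\<epsilon> \<le> 1\<close> unfolding \<sigma>2_def by blast
qed

end
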